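(* Let $k$ be a field, $n\ge 2$, and let $Q$ be the $n$-Kronecker quiver. Let $\mathcal F=\{(x,y)\in\mathbb N^2 : \tfrac{1}{n-1}x<y\le (n-1)x\}$. For every $(x,y)\in\mathcal F$ there are at least $n$ isomorphism classes of cover-thin $kQ$-modules $N$ with dimension vector $(x,y)$.
   Context: The $n$-Kronecker quiver $Q$ has two vertices, a source $1$ and a sink $2$, and $n$ arrows $\alpha_1,\dots,\alpha_n\colon 1\to 2$; a finite-dimensional $kQ$-module $N$ is a representation with spaces $N_1,N_2$ and maps $N_{\alpha_i}\colon N_1\to N_2$, with dimension vector $(\dim N_1,\dim N_2)$. The universal covering $\widetilde Q$ of $Q$ is the $n$-regular tree (every vertex has exactly $n$ neighbours) with bipartite orientation (every vertex is a sink or a source), together with the covering map to $Q$ sending sources to $1$, sinks to $2$, and labelling each arrow by some $\alpha_i$ such that at every vertex the $n$ incident arrows carry the $n$ distinct labels $\alpha_1,\dots,\alpha_n$. The push-down functor $\pi\colon \operatorname{mod}k\widetilde Q\to\operatorname{mod}kQ$ sends a finite-dimensional representation $M$ of $\widetilde Q$ to the $kQ$-module with $\pi(M)_1=\bigoplus_{v\text{ source}}M_v$, $\pi(M)_2=\bigoplus_{v\text{ sink}}M_v$, and $\pi(M)_{\alpha_i}$ the sum of the maps $M_\beta$ over all arrows $\beta$ of $\widetilde Q$ labelled $\alpha_i$. An indecomposable representation is thin if each of its vector spaces has dimension $0$ or $1$. A $kQ$-module is cover-thin if it is isomorphic to $\pi(M)$ for some thin indecomposable representation $M$ of $\widetilde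 Q$. Here $\mathbb N$ denotes the positive integers. *)

theory Defs
  imports Complex_Main "Jordan_Normal_Form.Matrix"
begin

text \<open>A kQ-module N is encoded (up to choice of bases) as (a, b, A) with
  N_1 = k^a, N_2 = k^b and N_{alpha_(i+1)} = A i, a b x a matrix, for i < n
  (the arrows alpha_1..alpha_n are indexed 0..n-1).\<close>

type_synonym 'k kmod = "nat \<times> nat \<times> (nat \<Rightarrow> 'k mat)"

definition kmod_valid :: "nat \<Rightarrow> 'k kmod \<Rightarrow> bool" where
  "kmod_valid n N = (case N of (a, b, A) \<Rightarrow> \<forall>i<n. A i \<in> carrier_mat b a)"

definition dimvec :: "'k kmod \<Rightarrow> nat \<times> nat" where
  "dimvec N = (case N of (a, b, A) \<Rightarrow> (a, b))"

definition kmod_iso :: "nat \<Rightarrow> 'k::field kmod \<Rightarrow> 'k kmod \<Rightarrow> bool" where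
  "kmod_iso n N N' = (case N of (a, b, A) \<Rightarrow> case N' of (a', b', A') \<Rightarrow>
     a = a' \<and> b = b' \<and>
     (\<exists>P R. P \<in> carrier_mat a a \<and> R \<in> carrier_mat b b \<and>
        invertible_mat P \<and> invertible_mat R \<and>
        (\<forall>i<n. R * A i = A' i * P)))"

text \<open>Vertices are reduced words over the labels {0..n-1} (no two consecutive
  equal letters), i.e. elements of the free product of n copies of Z/2.  The
  edge labelled i joins w and tstep w i.  Words of even length are sources
  (mapped to vertex 1), words of odd length are sinks (mapped to vertex 2);
  every arrow goes from a source u to tstep u i and is labelled alpha_(i+1).
  Each vertex has exactly n incident arrows, carrying the n distinct labels.\<close>

definition tree_vertex :: "nat \<Rightarrow> nat list \<Rightarrow> bool" where
  "tree_vertex n w = ((\<forall>x\<in>set w. x < n) \<and> (\<forall>j. Suc j < length w \<longrightarrow> w ! j \<noteq> w ! Suc j))"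

definition tstep :: "nat list \<Rightarrow> nat \<Rightarrow> nat list" where
  "tstep w i = (if w \<noteq> [] \<and> last w = i then butlast w else w @ [i])"

definition is_source :: "nat list \<Rightarrow> bool" where
  "is_source w = even (length w)"

text \<open>A thin representation M is given by its (finite) support S: M_v = k for
  v in S and M_v = 0 otherwise; and scalars lam u i: the map of the arrow from
  the source u with label i is multiplication by lam u i (the map is zero when
  one of its endpoints lies outside the support).\<close>

definition thin_space :: "nat list set \<Rightarrow> nat list \<Rightarrow> 'k::field set" where
  "thin_space S v = (if v \<in> S then UNIV else {0})"

definition thin_map :: "nat list set \<Rightarrow> (nat list \<Rightarrow> nat \<Rightarrow> 'k::field) \<Rightarrow> nat list \<Rightarrow> nat \<Rightarrow> 'k \<Rightarrow> 'k" where
  "thin_map S lam u i x = (if u \<in> S \<and> tstep u i \<in> S then lam u i * x else 0)"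

definition thin_subrep :: "nat \<Rightarrow> nat list set \<Rightarrow> (nat list \<Rightarrow> nat \<Rightarrow> 'k::field)
    \<Rightarrow> (nat list \<Rightarrow> 'k set) \<Rightarrow> bool" where
  "thin_subrep n S lam U =
     ((\<forall>v. U v \<subseteq> thin_space S v \<and> 0 \<in> U v \<and>
           (\<forall>x\<in>U v. \<forall>y\<in>U v. x + y \<in> U v) \<and> (\<forall>c. \<forall>x\<in>U v. c * x \<in> U v)) \<and>
      (\<forall>u i x. tree_vertex n u \<and> is_source u \<and> i < n \<and> x \<in> U u \<longrightarrow>
           thin_map S lam u i x \<in> U (tstep u i)))"

definition thin_decomposable :: "nat \<Rightarrow> nat list set \<Rightarrow> (nat list \<Rightarrow> nat \<Rightarrow> 'k::field) \<Rightarrow> bool" where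
  "thin_decomposable n S lam =
     (\<exists>U W. thin_subrep n S lam U \<and> thin_subrep n S lam W \<and>
        (\<exists>v. U v \<noteq> {0}) \<and> (\<exists>v. W v \<noteq> {0}) \<and>
        (\<forall>v. U v \<inter> W v = {0} \<and> {p + q | p q. p \<in> U v \<and> q \<in> W v} = thin_space S v))"

definition thin_indec :: "nat \<Rightarrow> nat list set \<Rightarrow> (nat list \<Rightarrow> nat \<Rightarrow> 'k::field) \<Rightarrow> bool" where
  "thin_indec n S lam =
     (finite S \<and> (\<forall>v\<in>S. tree_vertex n v) \<and> S \<noteq> {} \<and> \<not> thin_decomposable n S lam)"

text \<open>Matrix of pi(M)_{alpha_(i+1)} with respect to bases of
  pi(M)_1 = direct sum of M_u (u source in S), enumerated by e1, and
  pi(M)_2 = direct sum of M_w (w sink in S), enumerated by e2.\<close>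
definition pushdown :: "nat \<Rightarrow> nat list set \<Rightarrow> (nat list \<Rightarrow> nat \<Rightarrow> 'k::field)
    \<Rightarrow> (nat \<Rightarrow> nat list) \<Rightarrow> (nat \<Rightarrow> nat list) \<Rightarrow> 'k kmod" where
  "pushdown n S lam e1 e2 =
     (let a = card {u\<in>S. is_source u}; b = card {w\<in>S. \<not> is_source w} in
      (a, b, \<lambda>i. mat b a (\<lambda>(r, c). if e2 r = tstep (e1 c) i then thin_map S lam (e1 c) i 1 else 0)))"

definition cover_thin :: "nat \<Rightarrow> 'k::field kmod \<Rightarrow> bool" where
  "cover_thin n N =
     (kmod_valid n N \<and>
      (\<exists>S lam e1 e2. thin_indec n S lam \<and>
         bij_betw e1 {..<card {u\<in>S. is_source u}} {u\<in>S. is_source u} \<and>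
         bij_betw e2 {..<card {w\<in>S. \<not> is_source w}} {w\<in>S. \<not> is_source w} \<and>
         kmod_iso n N (pushdown n S lam e1 e2)))"

end

theory Submission
  imports Defs
begin

text \<open>
  For n = 2 the hypotheses are contradictory, so n \<ge> 3. Put z = min x y and q = |x - y|. For
  each cyclic relabelling j of the arrows take the thin representation of the tree with all
  scalars 1 whose support is a path of 2z vertices with q leaves attached to the z path vertices
  on the side that has to grow. The support is a subtree, so the representation is
  indecomposable, and its push-down has dimension vector (x, y).

  In such a push-down the map of an arrow is injective (for x \<le> y; surjective for x > y)
  exactly when every source (sink) of the support has its neighbour along that arrow in the
  support. This set of arrows is an isomorphism invariant, and here it is the cyclic interval of
  the 1 + \<lceil>q / z\<rceil> labels starting at j, of length strictly between 0 and n. Distinct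
  shifts j therefore give non-isomorphic modules.
\<close>

section \<open>Injectivity of arrow maps as an isomorphism invariant\<close>

definition inj_mat :: "'a::field mat \<Rightarrow> bool" where
  "inj_mat M = (\<forall>v \<in> carrier_vec (dim_col M). M *\<^sub>v v = 0\<^sub>v (dim_row M) \<longrightarrow> v = 0\<^sub>v (dim_col M))"

lemma mult_mat_vec_zero: "(A :: 'a::semiring_0 mat) \<in> carrier_mat nr nc \<Longrightarrow> A *\<^sub>v 0\<^sub>v nc = 0\<^sub>v nr"
  by (intro eq_vecI) auto

lemma invertible_matE:
  assumes "invertible_mat P" and P: "P \<in> carrier_mat m m"
  obtains Q where "Q \<in> carrier_mat m m" "P * Q = 1\<^sub>m m" "Q * P = 1\<^sub>m m"
proof -
  obtain Q where Q: "P * Q = 1\<^sub>m (dim_row P)" "Q * P = 1\<^sub>m (dim_row Q)"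
    using assms(1) unfolding invertible_mat_def inverts_mat_def by blast
  have "dim_col Q = m" using arg_cong[OF Q(1), of dim_col] P by simp
  moreover have "dim_row Q = m" using arg_cong[OF Q(2), of dim_col] P by simp
  ultimately show thesis using that Q P by auto
qed

lemma invertible_matI:
  assumes "P \<in> carrier_mat m m" "Q \<in> carrier_mat m m" "P * Q = 1\<^sub>m m" "Q * P = 1\<^sub>m m"
  shows "invertible_mat P"
  using assms unfolding invertible_mat_def inverts_mat_def by auto

lemma inj_mat_intertwined:
  fixes A :: "'a::field mat"
  assumes A: "A \<in> carrier_mat b a" "A' \<in> carrier_mat b a" and R: "R \<in> carrier_mat b b"
    and P: "P \<in> carrier_mat a a" "Q \<in> carrier_mat a a" "Q * P = 1\<^sub>m a"
    and eq: "R * A = A' * P" and inj: "inj_mat A'"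
  shows "inj_mat A"
  unfolding inj_mat_def
proof (intro ballI impI)
  fix v assume "v \<in> carrier_vec (dim_col A)" and Av: "A *\<^sub>v v = 0\<^sub>v (dim_row A)"
  hence v: "v \<in> carrier_vec a" using A by auto
  have "A' *\<^sub>v (P *\<^sub>v v) = R *\<^sub>v (A *\<^sub>v v)"
    using eq A R P v by (metis assoc_mult_mat_vec)
  also have "\<dots> = 0\<^sub>v b" using Av A R by (simp add: mult_mat_vec_zero)
  finally have "P *\<^sub>v v = 0\<^sub>v a" using inj A P v unfolding inj_mat_def by auto
  moreover have "v = Q *\<^sub>v (P *\<^sub>v v)" using P v by (metis assoc_mult_mat_vec one_mult_mat_vec)
  ultimately show "v = 0\<^sub>v (dim_col A)" using P v A by (simp add: mult_mat_vec_zero)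
qed

lemma inj_mat_incidence:
  fixes M :: "'a::field mat"
  assumes M: "M \<in> carrier_mat p q"
    and ent: "\<And>r c. r < p \<Longrightarrow> c < q \<Longrightarrow> M $$ (r, c) = (if f r = g c then 1 else 0)"
    and f: "inj_on f {..<p}" and g: "inj_on g {..<q}"
  shows "inj_mat M \<longleftrightarrow> g ` {..<q} \<subseteq> f ` {..<p}"
proof
  assume inj: "inj_mat M"
  show "g ` {..<q} \<subseteq> f ` {..<p}"
  proof (rule ccontr)
    assume "\<not> ?thesis"
    then obtain c where c: "c < q" and out: "g c \<notin> f ` {..<p}" by auto
    have "M *\<^sub>v unit_vec q c = 0\<^sub>v p"
    proof (rule eq_vecI)
      fix r assume "r < dim_vec (0\<^sub>v p)"
      hence r: "r < p" by simp
      have "f r \<noteq> g c" using out r by force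
      thus "(M *\<^sub>v unit_vec q c) $ r = 0\<^sub>v p $ r" using M r c ent[OF r c] by simp
    qed (use M in simp)
    hence "unit_vec q c = (0\<^sub>v q :: 'a vec)" using inj M unfolding inj_mat_def by auto
    thus False using unit_vec_nonzero[OF c, where 'a='a] by simp
  qed
next
  assume sub: "g ` {..<q} \<subseteq> f ` {..<p}"
  show "inj_mat M"
    unfolding inj_mat_def
  proof (intro ballI impI)
    fix v assume v: "v \<in> carrier_vec (dim_col M)" and Mv: "M *\<^sub>v v = 0\<^sub>v (dim_row M)"
    show "v = 0\<^sub>v (dim_col M)"
    proof (rule eq_vecI)
      fix c assume "c < dim_vec (0\<^sub>v (dim_col M))"
      hence c: "c < q" using M by auto
      obtain r where r: "r < p" "f r = g c" using sub c by auto
      have "0 = (M *\<^sub>v v) $ r" using Mv r M by auto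
      also have "\<dots> = (\<Sum>i<q. M $$ (r, i) * v $ i)"
        using r M v by (simp add: scalar_prod_def lessThan_atLeast0)
      also have "\<dots> = (\<Sum>i<q. if i = c then v $ i else 0)"
        using ent[OF r(1)] r(2) g c by (intro sum.cong) (auto simp: inj_on_def)
      also have "\<dots> = v $ c" using c by simp
      finally show "v $ c = 0\<^sub>v (dim_col M) $ c" using c M by auto
    qed (use v in simp)
  qed
qed

lemma kmod_iso_refl:
  assumes "kmod_valid n N" shows "kmod_iso n N N"
proof -
  obtain a b A where N: "N = (a, b, A)" by (cases N) auto
  have "\<forall>i<n. 1\<^sub>m b * A i = A i * 1\<^sub>m a" using assms N by (auto simp: kmod_valid_def)
  moreover have "invertible_mat (1\<^sub>m m :: 'a mat)" for m
    by (rule invertible_matI[of _ m "1\<^sub>m m"]) auto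
  ultimately show ?thesis unfolding N kmod_iso_def by (simp; meson one_carrier_mat)
qed

lemma kmod_iso_sym:
  fixes N N' :: "'k::field kmod"
  assumes iso: "kmod_iso n N N'" and v: "kmod_valid n N" and v': "kmod_valid n N'"
  shows "kmod_iso n N' N"
proof -
  obtain a b A a' b' A' where N: "N = (a, b, A)" and N': "N' = (a', b', A')"
    by (cases N, cases N') auto
  from iso obtain P R where ab: "a' = a" "b' = b" and P: "P \<in> carrier_mat a a" and R: "R \<in> carrier_mat b b"
    and iP: "invertible_mat P" and iR: "invertible_mat R" and eq: "\<forall>i<n. R * A i = A' i * P"
    unfolding N N' kmod_iso_def by auto
  obtain Q where Q: "Q \<in> carrier_mat a a" "P * Q = 1\<^sub>m a" "Q * P = 1\<^sub>m a"
    using invertible_matE[OF iP P] .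
  obtain S where S: "S \<in> carrier_mat b b" "R * S = 1\<^sub>m b" "S * R = 1\<^sub>m b"
    using invertible_matE[OF iR R] .
  have "S * A' i = A i * Q" if i: "i < n" for i
  proof -
    have A: "A i \<in> carrier_mat b a" "A' i \<in> carrier_mat b a"
      using v v' i ab unfolding N N' kmod_valid_def by auto
    have "S * A' i = S * (A' i * P) * Q"
      using A P Q S assoc_mult_mat[OF S(1) mult_carrier_mat[OF A(2) P] Q(1)]
        assoc_mult_mat[OF A(2) P Q(1)] by simp
    also have "\<dots> = (S * R) * A i * Q" using eq i assoc_mult_mat[OF S(1) R A(1)] by simp
    also have "\<dots> = A i * Q" using A S by simp
    finally show ?thesis .
  qed
  moreover have "invertible_mat Q" "invertible_mat S"
    using invertible_matI[OF Q(1) P Q(3) Q(2)] invertible_matI[OF S(1) R S(3) S(2)] .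
  ultimately show ?thesis using Q(1) S(1) ab unfolding N N' kmod_iso_def by auto
qed

definition kmod_dual :: "'k::field kmod \<Rightarrow> 'k kmod" where
  "kmod_dual N = (case N of (a, b, A) \<Rightarrow> (b, a, \<lambda>i. transpose_mat (A i)))"

lemma kmod_valid_dual: "kmod_valid n N \<Longrightarrow> kmod_valid n (kmod_dual N)"
  by (auto simp: kmod_valid_def kmod_dual_def split: prod.splits)

lemma invertible_mat_transpose:
  fixes P :: "'a::comm_ring_1 mat"
  assumes "invertible_mat P" "P \<in> carrier_mat m m"
  shows "invertible_mat (transpose_mat P)"
proof -
  obtain Q where Q: "Q \<in> carrier_mat m m" "P * Q = 1\<^sub>m m" "Q * P = 1\<^sub>m m"
    using invertible_matE[OF assms] .
  have "transpose_mat P * transpose_mat Q = 1\<^sub>m m"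
    by (metis transpose_mult[OF Q(1) assms(2)] Q(3) transpose_one)
  moreover have "transpose_mat Q * transpose_mat P = 1\<^sub>m m"
    by (metis transpose_mult[OF assms(2) Q(1)] Q(2) transpose_one)
  ultimately show ?thesis
    using assms(2) Q(1) by (intro invertible_matI[of _ m "transpose_mat Q"]) auto
qed

lemma kmod_iso_dual:
  fixes N N' :: "'k::field kmod"
  assumes iso: "kmod_iso n N N'" and v: "kmod_valid n N" and v': "kmod_valid n N'"
  shows "kmod_iso n (kmod_dual N') (kmod_dual N)"
proof -
  obtain a b A a' b' A' where N: "N = (a, b, A)" and N': "N' = (a', b', A')"
    by (cases N, cases N') auto
  from iso obtain P R where ab: "a' = a" "b' = b" and P: "P \<in> carrier_mat a a" and R: "R \<in> carrier_mat b b"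
    and iP: "invertible_mat P" and iR: "invertible_mat R" and eq: "\<forall>i<n. R * A i = A' i * P"
    unfolding N N' kmod_iso_def by auto
  have "transpose_mat P * transpose_mat (A' i) = transpose_mat (A i) * transpose_mat R" if i: "i < n" for i
  proof -
    have A: "A i \<in> carrier_mat b a" "A' i \<in> carrier_mat b a"
      using v v' i ab unfolding N N' kmod_valid_def by auto
    show ?thesis using eq i transpose_mult[OF R A(1)] transpose_mult[OF A(2) P] by simp
  qed
  hence "\<exists>P' R'. P' \<in> carrier_mat b b \<and> R' \<in> carrier_mat a a \<and>
      invertible_mat P' \<and> invertible_mat R' \<and>
      (\<forall>i<n. R' * transpose_mat (A' i) = transpose_mat (A i) * P')"
    using P R invertible_mat_transpose[OF iP P] invertible_mat_transpose[OF iR R]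
    by - (rule exI[of _ "transpose_mat R"], rule exI[of _ "transpose_mat P"], auto)
  then show ?thesis using ab unfolding N N' kmod_iso_def kmod_dual_def by simp
qed

definition inj_arrows :: "nat \<Rightarrow> 'k::field kmod \<Rightarrow> nat set" where
  "inj_arrows n N = (case N of (a, b, A) \<Rightarrow> {i. i < n \<and> inj_mat (A i)})"

lemma inj_arrows_iso_subset:
  fixes N N' :: "'k::field kmod"
  assumes iso: "kmod_iso n N N'" and v: "kmod_valid n N" and v': "kmod_valid n N'"
  shows "inj_arrows n N' \<subseteq> inj_arrows n N"
proof -
  obtain a b A a' b' A' where N: "N = (a, b, A)" and N': "N' = (a', b', A')"
    by (cases N, cases N') auto
  from iso obtain P R where ab: "a' = a" "b' = b" and P: "P \<in> carrier_mat a a" and R: "R \<in> carrier_mat b b"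
    and iP: "invertible_mat P" and eq: "\<forall>i<n. R * A i = A' i * P"
    unfolding N N' kmod_iso_def by auto
  obtain Q where Q: "Q \<in> carrier_mat a a" "Q * P = 1\<^sub>m a"
    using invertible_matE[OF iP P] by metis
  show ?thesis
  proof
    fix i assume "i \<in> inj_arrows n N'"
    hence i: "i < n" and inj: "inj_mat (A' i)" unfolding N' inj_arrows_def by auto
    have "A i \<in> carrier_mat b a" "A' i \<in> carrier_mat b a"
      using v v' i ab unfolding N N' kmod_valid_def by auto
    with inj_mat_intertwined[OF this R P Q(1) Q(2)] eq i inj show "i \<in> inj_arrows n N"
      unfolding N inj_arrows_def by auto
  qed
qed

lemma inj_arrows_iso:
  fixes N N' :: "'k::field kmod"
  assumes "kmod_iso n N N'" "kmod_valid n N" "kmod_valid n N'"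
  shows "inj_arrows n N = inj_arrows n N'"
  using inj_arrows_iso_subset[OF assms] inj_arrows_iso_subset[OF kmod_iso_sym[OF assms] assms(3,2)]
  by blast

lemma inj_arrows_side_iso:
  fixes N N' :: "'k::field kmod"
  assumes "kmod_iso n N N'" "kmod_valid n N" "kmod_valid n N'"
  shows "inj_arrows n (if s then N else kmod_dual N) = inj_arrows n (if s then N' else kmod_dual N')"
  using inj_arrows_iso[OF assms] inj_arrows_iso[OF kmod_iso_dual[OF assms] kmod_valid_dual kmod_valid_dual]
    assms(2,3) by simp

section \<open>Thin representations of the tree with all scalars 1\<close>

lemma is_source_tstep: "is_source (tstep u i) \<longleftrightarrow> \<not> is_source u"
  by (auto simp: tstep_def is_source_def)

lemma tree_vertex_last_butlast:
  assumes tv: "tree_vertex n v" and ne: "butlast v \<noteq> []"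
  shows "last (butlast v) \<noteq> last v"
proof -
  obtain k where k: "length v = Suc (Suc k)"
    using ne by (cases v rule: rev_cases) (auto simp: neq_Nil_conv)
  have "last (butlast v) = v ! k" "last v = v ! Suc k"
    using ne k by (simp_all add: last_conv_nth nth_butlast flip: length_greater_0_conv)
  thus ?thesis using tv k unfolding tree_vertex_def by simp
qed

lemma tstep_tstep:
  assumes "tree_vertex n u"
  shows "tstep (tstep u i) i = u"
proof (cases "u \<noteq> [] \<and> last u = i")
  case True
  hence "butlast u = [] \<or> last (butlast u) \<noteq> i"
    using tree_vertex_last_butlast[OF assms] by auto
  moreover have "butlast u @ [last u] = u" using True append_butlast_last_id by blast
  ultimately show ?thesis using True by (auto simp: tstep_def)
next
  case False
  thus ?thesis by (auto simp: tstep_def)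
qed

lemma tstep_inj:
  "tree_vertex n u \<Longrightarrow> tree_vertex n u' \<Longrightarrow> tstep u i = tstep u' i \<Longrightarrow> u = u'"
  by (metis tstep_tstep)

lemma tstep_butlast_last:
  assumes "tree_vertex n v" and "v \<noteq> []"
  shows "tstep (butlast v) (last v) = v"
  using tree_vertex_last_butlast[OF assms(1)] assms(2) by (auto simp: tstep_def)

lemma tree_parent_arrow:
  assumes tv: "tree_vertex n v" and ne: "v \<noteq> []"
  obtains u i where "i < n" "is_source u" "{u, tstep u i} = {v, butlast v}"
proof -
  have i: "last v < n" using tv ne unfolding tree_vertex_def by auto
  have up: "tstep v (last v) = butlast v" using ne by (simp add: tstep_def)
  have down: "tstep (butlast v) (last v) = v" by (rule tstep_butlast_last[OF tv ne])
  show thesis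
  proof (cases "is_source v")
    case True
    thus thesis using that[OF i True] up by auto
  next
    case False
    hence "is_source (butlast v)" using is_source_tstep[of "butlast v" "last v"] down by simp
    moreover have "{butlast v, tstep (butlast v) (last v)} = {v, butlast v}" using down by auto
    ultimately show thesis using that[OF i] by blast
  qed
qed

lemma thin_subrep_one:
  fixes X :: "nat list \<Rightarrow> 'k::field set"
  assumes "thin_subrep n S lam X" "x \<in> X v" "x \<noteq> 0"
  shows "1 \<in> X v"
proof -
  have "inverse x * x \<in> X v" using assms(1,2) unfolding thin_subrep_def by blast
  thus ?thesis using assms(3) by simp
qed

lemma thin_subrep_zero:
  fixes X :: "nat list \<Rightarrow> 'k::field set"
  assumes X: "thin_subrep n S lam X" and no: "\<forall>v\<in>S. 1 \<notin> X v"
  shows "X v = {0}"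
proof -
  have "X v \<subseteq> thin_space S v" "0 \<in> X v" using X unfolding thin_subrep_def by auto
  thus ?thesis using thin_subrep_one[OF X] no by (cases "v \<in> S") (auto simp: thin_space_def)
qed

lemma thin_subrep_const_arrow:
  fixes X :: "nat list \<Rightarrow> 'k::field set"
  assumes X: "thin_subrep n S (\<lambda>_ _. 1) X" and u: "tree_vertex n u" "is_source u" "i < n"
    and S: "u \<in> S" "tstep u i \<in> S" and one: "1 \<in> X u"
  shows "1 \<in> X (tstep u i)"
proof -
  have "thin_map S (\<lambda>_ _. 1) u i 1 \<in> X (tstep u i)" using X u one unfolding thin_subrep_def by blast
  thus ?thesis using S by (simp add: thin_map_def)
qed

lemma thin_decomposition_one:
  fixes U W :: "nat list \<Rightarrow> 'k::field set"
  assumes U: "thin_subrep n S lam U" and W: "thin_subrep n S lam W"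
    and dec: "U v \<inter> W v = {0}" "{p + q | p q. p \<in> U v \<and> q \<in> W v} = thin_space S v"
    and v: "v \<in> S"
  shows "1 \<in> U v \<longleftrightarrow> 1 \<notin> W v"
proof -
  have "1 \<in> thin_space S v" using v by (simp add: thin_space_def)
  then obtain p q where pq: "p \<in> U v" "q \<in> W v" "1 = p + q" using dec(2) by blast
  hence "p \<noteq> 0 \<or> q \<noteq> 0" by auto
  hence "1 \<in> U v \<or> 1 \<in> W v" using thin_subrep_one[OF U pq(1)] thin_subrep_one[OF W pq(2)] by blast
  moreover have "\<not> (1 \<in> U v \<and> 1 \<in> W v)" using dec(1) by (metis IntI one_neq_zero singletonD)
  ultimately show ?thesis by blast
qed

text \<open>With all scalars equal to 1, a summand of a decomposition containing the vector 1 at one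
  vertex contains it at every neighbouring vertex of the support, hence, the support being
  connected, everywhere.\<close>
lemma thin_const_summand_root:
  fixes U W :: "nat list \<Rightarrow> 'k::field set"
  assumes U: "thin_subrep n S (\<lambda>_ _. 1) U" and W: "thin_subrep n S (\<lambda>_ _. 1) W"
    and compl: "\<And>v. v \<in> S \<Longrightarrow> 1 \<in> U v \<longleftrightarrow> 1 \<notin> W v"
    and tv: "\<forall>v\<in>S. tree_vertex n v" and closed: "\<forall>v\<in>S. v \<noteq> [] \<longrightarrow> butlast v \<in> S"
    and v: "v \<in> S"
  shows "1 \<in> U v \<longleftrightarrow> 1 \<in> U []"
proof -
  have parent: "1 \<in> U v \<longleftrightarrow> 1 \<in> U (butlast v)" if v: "v \<in> S" "v \<noteq> []" for v
  proof -
    obtain u i where i: "i < n" "is_source u" and e: "{u, tstep u i} = {v, butlast v}"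
      using tree_parent_arrow tv v by metis
    have "{u, tstep u i} \<subseteq> S" using e v closed by simp
    hence uS: "u \<in> S" "tstep u i \<in> S" by simp_all
    hence tvu: "tree_vertex n u" using tv by simp
    have "1 \<in> U u \<longleftrightarrow> 1 \<in> U (tstep u i)"
      using thin_subrep_const_arrow[OF U tvu i(2,1) uS] thin_subrep_const_arrow[OF W tvu i(2,1) uS]
        compl[OF uS(1)] compl[OF uS(2)] by blast
    thus ?thesis using e by (auto simp: doubleton_eq_iff)
  qed
  show ?thesis
    using v
  proof (induction "length v" arbitrary: v)
    case (Suc m)
    hence "v \<noteq> []" "butlast v \<in> S" "m = length (butlast v)" using closed by auto
    thus ?case using Suc.hyps(1) parent[OF Suc.prems] by blast
  qed simp
qed

lemma thin_indec_const_prefix_closed: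
  assumes fin: "finite S" and root: "[] \<in> S" and tv: "\<forall>v\<in>S. tree_vertex n v"
    and closed: "\<forall>v\<in>S. v \<noteq> [] \<longrightarrow> butlast v \<in> S"
  shows "thin_indec n S (\<lambda>_ _. 1::'k::field)"
  unfolding thin_indec_def
proof (intro conjI)
  show "finite S" "\<forall>v\<in>S. tree_vertex n v" "S \<noteq> {}" using fin tv root by auto
  show "\<not> thin_decomposable n S (\<lambda>_ _. 1::'k)"
  proof
    assume "thin_decomposable n S (\<lambda>_ _. 1::'k)"
    then obtain U W where U: "thin_subrep n S (\<lambda>_ _. 1::'k) U" and W: "thin_subrep n S (\<lambda>_ _. 1) W"
      and Un: "\<exists>v. U v \<noteq> {0}" and Wn: "\<exists>v. W v \<noteq> {0}"
      and dec: "\<forall>v. U v \<inter> W v = {0} \<and> {p + q | p q. p \<in> U v \<and> q \<in> W v} = thin_space S v"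
      unfolding thin_decomposable_def by blast
    have compl: "1 \<in> U v \<longleftrightarrow> 1 \<notin> W v" if "v \<in> S" for v
      using thin_decomposition_one[OF U W _ _ that] dec by blast
    note root_eq = thin_const_summand_root[OF U W compl tv closed]
    show False
    proof (cases "1 \<in> U []")
      case True
      hence "\<forall>v\<in>S. 1 \<notin> W v" using root_eq compl by blast
      thus False using thin_subrep_zero[OF W] Wn by blast
    next
      case False
      hence "\<forall>v\<in>S. 1 \<notin> U v" using root_eq by blast
      thus False using thin_subrep_zero[OF U] Un by blast
    qed
  qed
qed

lemma kmod_valid_pushdown: "kmod_valid n (pushdown n S lam e1 e2)"
  by (simp add: kmod_valid_def pushdown_def Let_def)

locale enumerated_support =
  fixes n :: nat and S :: "nat list set" and e1 e2 :: "nat \<Rightarrow> nat list"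
  assumes tree: "\<forall>v\<in>S. tree_vertex n v"
    and e1: "bij_betw e1 {..<card {u\<in>S. is_source u}} {u\<in>S. is_source u}"
    and e2: "bij_betw e2 {..<card {w\<in>S. \<not> is_source w}} {w\<in>S. \<not> is_source w}"
begin

abbreviation "a \<equiv> card {u\<in>S. is_source u}"
abbreviation "b \<equiv> card {w\<in>S. \<not> is_source w}"

definition arrow_mat :: "nat \<Rightarrow> 'k::field mat" where
  "arrow_mat = snd (snd (pushdown n S (\<lambda>_ _. 1) e1 e2))"

lemma pushdown_const: "pushdown n S (\<lambda>_ _. 1::'k::field) e1 e2 = (a, b, arrow_mat)"
  unfolding arrow_mat_def pushdown_def Let_def by simp

lemma arrow_mat_carrier: "arrow_mat i \<in> carrier_mat b a"
  unfolding arrow_mat_def pushdown_def Let_def by simp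

lemma arrow_mat_entry:
  assumes "r < b" and "c < a"
  shows "(arrow_mat i :: 'k::field mat) $$ (r, c) = (if e2 r = tstep (e1 c) i then 1 else 0)"
proof -
  have "e1 c \<in> S" "e2 r \<in> S" using assms e1 e2 by (auto simp: bij_betw_def)
  thus ?thesis using assms by (auto simp: arrow_mat_def pushdown_def Let_def thin_map_def)
qed

lemma inj_on_tstep_enum:
  assumes e: "bij_betw e {..<m} T" and T: "T \<subseteq> S"
  shows "inj_on (\<lambda>c. tstep (e c) i) {..<m}"
proof (rule inj_onI)
  fix c c' assume c: "c \<in> {..<m}" "c' \<in> {..<m}" and eq: "tstep (e c) i = tstep (e c') i"
  have "e c \<in> S" "e c' \<in> S" using e c T by (auto simp: bij_betw_def)
  hence "e c = e c'" using tstep_inj tree eq by blast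
  thus "c = c'" using e c by (auto simp: bij_betw_def inj_on_def)
qed

lemma tstep_image_subset_iff:
  assumes "bij_betw e {..<m} {u\<in>S. is_source u = s}" and "bij_betw e' {..<m'} {u\<in>S. is_source u \<noteq> s}"
  shows "(\<lambda>c. tstep (e c) i) ` {..<m} \<subseteq> e' ` {..<m'} \<longleftrightarrow> (\<forall>u\<in>S. is_source u = s \<longrightarrow> tstep u i \<in> S)"
proof -
  have "(\<lambda>c. tstep (e c) i) ` {..<m} = (\<lambda>u. tstep u i) ` (e ` {..<m})" by (simp add: image_image)
  also have "\<dots> = (\<lambda>u. tstep u i) ` {u\<in>S. is_source u = s}" using assms(1) by (simp add: bij_betw_def)
  finally have img: "(\<lambda>c. tstep (e c) i) ` {..<m} = (\<lambda>u. tstep u i) ` {u\<in>S. is_source u = s}" .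
  have surj: "e' ` {..<m'} = {u\<in>S. is_source u \<noteq> s}" using assms(2) by (rule bij_betw_imp_surj_on)
  show ?thesis unfolding img surj image_subset_iff using is_source_tstep by auto
qed

lemma inj_arrows_pushdown:
  "inj_arrows n (pushdown n S (\<lambda>_ _. 1::'k::field) e1 e2) =
     {i. i < n \<and> (\<forall>u\<in>S. is_source u \<longrightarrow> tstep u i \<in> S)}"
proof -
  have "inj_mat (arrow_mat i :: 'k mat) \<longleftrightarrow> (\<forall>u\<in>S. is_source u \<longrightarrow> tstep u i \<in> S)" for i
  proof -
    have "inj_mat (arrow_mat i :: 'k mat) \<longleftrightarrow> (\<lambda>c. tstep (e1 c) i) ` {..<a} \<subseteq> e2 ` {..<b}"
      by (rule inj_mat_incidence[OF arrow_mat_carrier arrow_mat_entry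
            bij_betw_imp_inj_on[OF e2] inj_on_tstep_enum[OF e1]]) auto
    also have "\<dots> \<longleftrightarrow> (\<forall>u\<in>S. is_source u \<longrightarrow> tstep u i \<in> S)"
      using tstep_image_subset_iff[of e1 _ True e2] e1 e2 by simp
    finally show ?thesis .
  qed
  thus ?thesis unfolding pushdown_const inj_arrows_def by auto
qed

lemma inj_arrows_pushdown_dual:
  "inj_arrows n (kmod_dual (pushdown n S (\<lambda>_ _. 1::'k::field) e1 e2)) =
     {i. i < n \<and> (\<forall>w\<in>S. \<not> is_source w \<longrightarrow> tstep w i \<in> S)}"
proof -
  have "inj_mat (transpose_mat (arrow_mat i :: 'k mat)) \<longleftrightarrow> (\<forall>w\<in>S. \<not> is_source w \<longrightarrow> tstep w i \<in> S)" for i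
  proof -
    have entry: "transpose_mat (arrow_mat i :: 'k mat) $$ (r, c) = (if e1 r = tstep (e2 c) i then 1 else 0)"
      if "r < a" "c < b" for r c
    proof -
      have "e1 r \<in> S" "e2 c \<in> S" using e1 e2 that unfolding bij_betw_def by auto
      hence "e2 c = tstep (e1 r) i \<longleftrightarrow> e1 r = tstep (e2 c) i" using tree tstep_tstep by metis
      moreover have "(arrow_mat i :: 'k mat) \<in> carrier_mat b a" by (rule arrow_mat_carrier)
      moreover have "(arrow_mat i :: 'k mat) $$ (c, r) = (if e2 c = tstep (e1 r) i then 1 else 0)"
        by (rule arrow_mat_entry[OF that(2,1)])
      ultimately show ?thesis using that by simp
    qed
    have "inj_mat (transpose_mat (arrow_mat i :: 'k mat)) \<longleftrightarrow>
        (\<lambda>c. tstep (e2 c) i) ` {..<b} \<subseteq> e1 ` {..<a}"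
      using arrow_mat_carrier[of i]
      by (intro inj_mat_incidence[OF _ entry bij_betw_imp_inj_on[OF e1] inj_on_tstep_enum[OF e2]]) auto
    also have "\<dots> \<longleftrightarrow> (\<forall>w\<in>S. \<not> is_source w \<longrightarrow> tstep w i \<in> S)"
      using tstep_image_subset_iff[of e2 _ False e1] e1 e2 by simp
    finally show ?thesis .
  qed
  thus ?thesis unfolding pushdown_const inj_arrows_def kmod_dual_def by auto
qed

lemma inj_arrows_pushdown_side:
  "inj_arrows n (if s then pushdown n S (\<lambda>_ _. 1::'k::field) e1 e2 else kmod_dual (pushdown n S (\<lambda>_ _. 1) e1 e2)) =
     {i. i < n \<and> (\<forall>u\<in>S. is_source u = s \<longrightarrow> tstep u i \<in> S)}"
  by (cases s) (simp_all add: inj_arrows_pushdown inj_arrows_pushdown_dual)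

end

section \<open>A spine with pendants\<close>

lemma mult_less_iff_less_ceiling_div:
  fixes a z q :: nat
  assumes "0 < z"
  shows "a * z < q \<longleftrightarrow> a < (q + z - 1) div z"
proof -
  have "a < (q + z - 1) div z \<longleftrightarrow> Suc a \<le> (q + z - 1) div z" by (rule Suc_le_eq[symmetric])
  also have "\<dots> \<longleftrightarrow> Suc a * z \<le> q + z - 1" by (rule less_eq_div_iff_mult_less_eq[OF assms])
  also have "\<dots> \<longleftrightarrow> a * z < q" using assms by auto
  finally show ?thesis by simp
qed

text \<open>The support of the j-th module, for the labelling lab. The spine consists of the words
  spine 0 = [], ..., spine (2z - 1), whose letters alternate between lab 0 and lab 1. The base
  vertices base k = spine (2k + off), k < z, are the spine vertices on the side that receives the
  q pendant leaves: the sources if off = 0 (the case x \<le> y), the sinks if off = 1. Pendant i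
  hangs at base vertex pendant_pos i by an arrow labelled lab (pendant_label i); the pendants
  fill the columns of labels lab 1, lab 2, ... in turn, where lab 1 has only the one slot
  left free by the spine.\<close>
locale spine_with_pendants =
  fixes n :: nat and lab :: "nat \<Rightarrow> nat" and z q off :: nat
  assumes n_ge_3: "n \<ge> 3" and lab: "bij_betw lab {..<n} {..<n}"
    and z_pos: "0 < z" and q_le: "q \<le> (n - 2) * z" and off_le_1: "off \<le> 1"
begin

definition spine_letter :: "nat \<Rightarrow> nat" where
  "spine_letter L = lab (L mod 2)"

definition spine :: "nat \<Rightarrow> nat list" where
  "spine L = map spine_letter [0..<L]"

definition base :: "nat \<Rightarrow> nat list" where
  "base k = spine (2 * k + off)"

definition pendant_pos :: "nat \<Rightarrow> nat" where
  "pendant_pos i = (if i = 0 then (if off = 0 then 0 else z - 1) else (i - 1) mod z)"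

definition pendant_label :: "nat \<Rightarrow> nat" where
  "pendant_label i = (if i = 0 then 1 else (i - 1) div z + 2)"

definition pendant :: "nat \<Rightarrow> nat list" where
  "pendant i = base (pendant_pos i) @ [lab (pendant_label i)]"

definition support :: "nat list set" where
  "support = spine ` {..<2 * z} \<union> pendant ` {..<q}"

lemma lab_less: "c < n \<Longrightarrow> lab c < n"
  using lab by (auto simp: bij_betw_def)

lemma lab_eq_iff: "c < n \<Longrightarrow> d < n \<Longrightarrow> lab c = lab d \<longleftrightarrow> c = d"
  using lab by (auto simp: bij_betw_def inj_on_def)

lemma spine_letter_less: "spine_letter L < n"
  using n_ge_3 by (simp add: spine_letter_def lab_less)

lemma spine_letter_Suc: "spine_letter (Suc L) \<noteq> spine_letter L"
  using n_ge_3 lab_eq_iff[of "Suc L mod 2" "L mod 2"] by (auto simp: spine_letter_def mod_Suc)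

lemma length_spine [simp]: "length (spine L) = L"
  by (simp add: spine_def)

lemma spine_0 [simp]: "spine 0 = []"
  by (simp add: spine_def)

lemma spine_Suc: "spine (Suc L) = spine L @ [spine_letter L]"
  by (simp add: spine_def)

lemma spine_eq_iff [simp]: "spine L = spine M \<longleftrightarrow> L = M"
  by (metis length_spine)

lemma spine_eq_snoc_iff: "spine M = spine L @ [l] \<longleftrightarrow> M = Suc L \<and> l = spine_letter L"
  by (metis length_spine length_append_singleton spine_Suc append1_eq_conv)

lemma tree_vertex_spine_snoc:
  assumes l: "l < n" and ne: "L > 0 \<Longrightarrow> l \<noteq> spine_letter (L - 1)"
  shows "tree_vertex n (spine L @ [l])"
  unfolding tree_vertex_def
proof (intro conjI allI impI ballI)
  fix x assume "x \<in> set (spine L @ [l])"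
  thus "x < n" using l spine_letter_less by (auto simp: spine_def)
next
  fix j assume j: "Suc j < length (spine L @ [l])"
  show "(spine L @ [l]) ! j \<noteq> (spine L @ [l]) ! Suc j"
  proof (cases "Suc j < L")
    case True
    thus ?thesis using spine_letter_Suc[of j] by (simp add: nth_append spine_def)
  next
    case False
    hence "Suc j = L" using j by simp
    thus ?thesis using ne by (auto simp: nth_append spine_def)
  qed
qed

lemma tree_vertex_spine: "tree_vertex n (spine L)"
  unfolding tree_vertex_def using spine_letter_less spine_letter_Suc[symmetric] by (auto simp: spine_def)

lemma tstep_spine_forward: "tstep (spine L) (spine_letter L) = spine (Suc L)"
  by (cases L) (auto simp: tstep_def spine_Suc spine_letter_Suc[symmetric])

lemma tstep_spine_back: "tstep (spine (Suc L)) (spine_letter L) = spine L"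
  by (simp add: tstep_def spine_Suc)

lemma tstep_spine_snoc: "L = 0 \<or> l \<noteq> spine_letter (L - 1) \<Longrightarrow> tstep (spine L) l = spine L @ [l]"
  by (cases L) (auto simp: tstep_def spine_Suc spine_def)

lemma spine_letter_base: "spine_letter (2 * k + off) = lab off"
  using off_le_1 by (simp add: spine_letter_def)

lemma pendant_pos_less: "pendant_pos i < z"
  using z_pos by (simp add: pendant_pos_def)

lemma pendant_label_less: "i < q \<Longrightarrow> pendant_label i < n"
proof (cases "i = 0")
  case False
  assume "i < q"
  hence "i - 1 < (n - 2) * z" using q_le False by simp
  hence "(i - 1) div z < n - 2" by (simp add: less_mult_imp_div_less)
  thus ?thesis using False by (simp add: pendant_label_def)
qed (use n_ge_3 in \<open>simp add: pendant_label_def\<close>)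

lemma pendant_label_eq_1_iff: "pendant_label i = 1 \<longleftrightarrow> i = 0"
  by (simp add: pendant_label_def)

lemma pendant_slot_iff:
  assumes "k < z" and "2 \<le> c"
  shows "(\<exists>i<q. pendant_pos i = k \<and> pendant_label i = c) \<longleftrightarrow> (c - 2) * z + k + 1 < q"
proof
  assume "\<exists>i<q. pendant_pos i = k \<and> pendant_label i = c"
  then obtain i where i: "i < q" "pendant_pos i = k" "pendant_label i = c" by blast
  hence "i \<noteq> 0" using assms(2) by (auto simp: pendant_label_def split: if_splits)
  hence "(i - 1) mod z = k" "(i - 1) div z = c - 2" using i by (auto simp: pendant_pos_def pendant_label_def)
  hence "i - 1 = (c - 2) * z + k" by (metis div_mult_mod_eq)
  thus "(c - 2) * z + k + 1 < q" using i \<open>i \<noteq> 0\<close> by simp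
next
  assume "(c - 2) * z + k + 1 < q"
  moreover have "pendant_pos ((c - 2) * z + k + 1) = k" "pendant_label ((c - 2) * z + k + 1) = c"
    using assms by (simp_all add: pendant_pos_def pendant_label_def)
  ultimately show "\<exists>i<q. pendant_pos i = k \<and> pendant_label i = c" by blast
qed

lemma inj_on_pendant: "inj_on pendant {..<q}"
proof (rule inj_onI)
  fix i j assume i: "i \<in> {..<q}" and j: "j \<in> {..<q}" and eq: "pendant i = pendant j"
  hence pos: "pendant_pos i = pendant_pos j" and "lab (pendant_label i) = lab (pendant_label j)"
    by (simp_all add: pendant_def base_def)
  hence label: "pendant_label i = pendant_label j" using i j lab_eq_iff pendant_label_less by auto
  show "i = j"
  proof (cases "i = 0 \<or> j = 0")
    case True thus ?thesis using label pendant_label_eq_1_iff by metis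
  next
    case False
    hence "(i - 1) mod z = (j - 1) mod z" "(i - 1) div z = (j - 1) div z"
      using pos label by (auto simp: pendant_pos_def pendant_label_def)
    hence "i - 1 = j - 1" by (metis div_mult_mod_eq)
    thus ?thesis using False by arith
  qed
qed

text \<open>Pendant 0 supplies the one lab 1 neighbour of a base vertex that the spine lacks: at the
  root if the base vertices are the sources, at the far end of the spine otherwise.\<close>
lemma pendant_0: "pendant 0 = tstep (base (pendant_pos 0)) (lab 1)"
proof (cases "off = 0")
  case True
  hence "base (pendant_pos 0) = []" unfolding pendant_pos_def base_def by simp
  thus ?thesis by (simp add: pendant_def pendant_label_def tstep_def)
next
  case False
  let ?m = "Suc (2 * (z - 1))"
  have b: "base (pendant_pos 0) = spine ?m"
    using False off_le_1 unfolding base_def pendant_pos_def by simp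
  have "pendant 0 = spine ?m @ [lab 1]" unfolding pendant_def b pendant_label_def by simp
  also have "\<dots> = tstep (spine ?m) (lab 1)"
    using tstep_spine_forward[of ?m] by (simp add: spine_Suc spine_letter_def)
  finally show ?thesis unfolding b .
qed

lemma pendant_notin_spine:
  assumes "pendant_label i < n"
  shows "pendant i \<notin> spine ` {..<2 * z}"
proof
  assume "pendant i \<in> spine ` {..<2 * z}"
  then obtain M where M: "M < 2 * z" "spine M = pendant i" by auto
  hence "M = Suc (2 * pendant_pos i + off)" and "lab (pendant_label i) = lab off"
    unfolding pendant_def base_def spine_eq_snoc_iff spine_letter_base by simp_all
  moreover have "off < n" using off_le_1 n_ge_3 by simp
  ultimately have "pendant_label i = off" "M = Suc (2 * pendant_pos i + off)"
    using lab_eq_iff assms by auto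
  hence "i = 0" "off = 1" using off_le_1 by (auto simp: pendant_label_def split: if_splits)
  thus False using M(1) \<open>M = Suc (2 * pendant_pos i + off)\<close> z_pos unfolding pendant_pos_def by simp
qed

lemma tree_vertex_support: "\<forall>v\<in>support. tree_vertex n v"
proof
  fix v assume "v \<in> support"
  then consider L where "v = spine L" | i where "i < q" "v = pendant i"
    unfolding support_def by blast
  thus "tree_vertex n v"
  proof cases
    case (2 i)
    have "lab (pendant_label i) \<noteq> spine_letter (2 * pendant_pos i + off - 1)"
      if "2 * pendant_pos i + off > 0"
    proof -
      have parity: "(2 * p + off - 1) mod 2 = 1 - off" if "0 < 2 * p + off" for p
        using that off_le_1 by (cases off; cases p) auto
      note parity[OF that]
      moreover have "pendant_label i \<noteq> 1 - off"
        using that off_le_1 unfolding pendant_label_def pendant_pos_def by (cases off) (auto split: if_splits)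
      ultimately show ?thesis
        using lab_eq_iff[OF pendant_label_less[OF 2(1)], of "1 - off"] n_ge_3 by (simp add: spine_letter_def)
    qed
    thus ?thesis unfolding 2 pendant_def base_def
      by (intro tree_vertex_spine_snoc lab_less pendant_label_less[OF 2(1)])
  qed (simp add: tree_vertex_spine)
qed

lemma butlast_in_support: "\<forall>v\<in>support. v \<noteq> [] \<longrightarrow> butlast v \<in> support"
proof (intro ballI impI)
  fix v assume v: "v \<in> support" "v \<noteq> []"
  show "butlast v \<in> support"
  proof (cases "v \<in> spine ` {..<2 * z}")
    case True
    then obtain L where "L < 2 * z" "v = spine L" by auto
    moreover have "L \<noteq> 0" using v(2) \<open>v = spine L\<close> by (metis spine_0)
    ultimately obtain L' where "L' < 2 * z" "v = spine (Suc L')" by (cases L) auto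
    thus ?thesis by (simp add: support_def spine_Suc)
  next
    case False
    then obtain i where "i < q" "v = pendant i" using v unfolding support_def by auto
    moreover have "2 * pendant_pos i + off < 2 * z" using pendant_pos_less[of i] off_le_1 by simp
    ultimately show ?thesis by (simp add: support_def pendant_def base_def)
  qed
qed

lemma Nil_in_support: "[] \<in> support"
  using z_pos by (auto simp: support_def intro: image_eqI[of _ _ 0])

lemma finite_support: "finite support"
  by (simp add: support_def)

lemma is_source_spine: "is_source (spine L) \<longleftrightarrow> even L"
  by (simp add: is_source_def)

lemma is_source_pendant: "is_source (pendant i) \<longleftrightarrow> off = 1"
  unfolding is_source_def pendant_def base_def using off_le_1 by (cases off) auto

lemma spine_side:
  assumes "r \<le> 1"
  shows "{v \<in> spine ` {..<2 * z}. is_source v = (r = 0)} = (\<lambda>k. spine (2 * k + r)) ` {..<z}"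
proof (intro equalityI subsetI)
  fix v assume "v \<in> {v \<in> spine ` {..<2 * z}. is_source v = (r = 0)}"
  then obtain L where L: "L < 2 * z" "v = spine L" "even L \<longleftrightarrow> r = 0" by (auto simp: is_source_spine)
  have "L mod 2 = r" using L(3) assms by (cases r) (auto simp: even_iff_mod_2_eq_zero odd_iff_mod_2_eq_one)
  hence "L = 2 * (L div 2) + r" by (metis div_mult_mod_eq mult.commute)
  moreover have "L div 2 < z" using L(1) by simp
  ultimately show "v \<in> (\<lambda>k. spine (2 * k + r)) ` {..<z}"
    using L(2) by (intro image_eqI[of _ _ "L div 2"]) simp_all
next
  fix v assume "v \<in> (\<lambda>k. spine (2 * k + r)) ` {..<z}"
  then obtain k where "k < z" "v = spine (2 * k + r)" by blast
  thus "v \<in> {v \<in> spine ` {..<2 * z}. is_source v = (r = 0)}"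
    using assms by (cases r) (auto simp: is_source_spine)
qed

lemma support_side:
  assumes "r \<le> 1"
  shows "{v \<in> support. is_source v = (r = 0)} =
    (\<lambda>k. spine (2 * k + r)) ` {..<z} \<union> (if r + off = 1 then pendant ` {..<q} else {})"
proof -
  have "{v \<in> pendant ` {..<q}. is_source v = (r = 0)} = (if r + off = 1 then pendant ` {..<q} else {})"
  proof -
    have "(off = 1) = (r = 0) \<longleftrightarrow> r + off = 1" using assms off_le_1 by auto
    moreover have "is_source v \<longleftrightarrow> off = 1" if "v \<in> pendant ` {..<q}" for v
      using that is_source_pendant by blast
    ultimately have side: "is_source v = (r = 0) \<longleftrightarrow> r + off = 1" if "v \<in> pendant ` {..<q}" for v
      using that by simp
    show ?thesis
    proof (cases "r + off = 1")
      case True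
      thus ?thesis using side by auto
    next
      case False
      thus ?thesis using side by auto
    qed
  qed
  moreover have "{v \<in> support. is_source v = (r = 0)} =
      {v \<in> spine ` {..<2 * z}. is_source v = (r = 0)} \<union> {v \<in> pendant ` {..<q}. is_source v = (r = 0)}"
    unfolding support_def by blast
  ultimately show ?thesis using spine_side[OF assms] by simp
qed

lemma card_support_side:
  assumes "r \<le> 1"
  shows "card {v \<in> support. is_source v = (r = 0)} = z + (if r + off = 1 then q else 0)"
proof -
  have "card ((\<lambda>k. spine (2 * k + r)) ` {..<z}) = z" by (simp add: card_image inj_on_def)
  moreover have "card (pendant ` {..<q}) = q" by (simp add: card_image inj_on_pendant)
  moreover have "(\<lambda>k. spine (2 * k + r)) ` {..<z} \<inter> pendant ` {..<q} = {}"
  proof -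
    have "spine (2 * k + r) \<notin> pendant ` {..<q}" if "k < z" for k
    proof
      assume "spine (2 * k + r) \<in> pendant ` {..<q}"
      then obtain i where i: "i < q" "spine (2 * k + r) = pendant i" by auto
      have "2 * k + r < 2 * z" using that assms by simp
      hence "pendant i \<in> spine ` {..<2 * z}" using i(2) by (metis image_eqI lessThan_iff)
      thus False using pendant_notin_spine[OF pendant_label_less[OF i(1)]] by contradiction
    qed
    thus ?thesis by blast
  qed
  ultimately show ?thesis unfolding support_side[OF assms] by (simp add: card_Un_disjoint)
qed

lemma card_sources: "card {u \<in> support. is_source u} = z + (if off = 1 then q else 0)"
  using card_support_side[of 0] by simp

lemma card_sinks: "card {w \<in> support. \<not> is_source w} = z + (if off = 0 then q else 0)"
  using card_support_side[of 1] off_le_1 by auto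

lemma base_support: "{u \<in> support. is_source u = (off = 0)} = base ` {..<z}"
proof -
  have "off + off \<noteq> 1" by arith
  thus ?thesis using support_side[OF off_le_1] by (simp add: base_def)
qed

lemma tstep_base_lab0:
  assumes "k < z"
  shows "tstep (base k) (lab 0) \<in> spine ` {..<2 * z}"
proof (cases "off = 0")
  case True
  hence "tstep (base k) (lab 0) = spine (Suc (2 * k + off))"
    unfolding base_def using tstep_spine_forward[of "2 * k + off"] spine_letter_base[of k] by simp
  moreover have "Suc (2 * k + off) < 2 * z" using True assms by simp
  ultimately show ?thesis by simp
next
  case False
  hence "off = 1" using off_le_1 by simp
  hence "tstep (base k) (lab 0) = spine (2 * k)"
    unfolding base_def using tstep_spine_back[of "2 * k"] by (simp add: spine_letter_def)
  thus ?thesis using assms by simp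
qed

lemma tstep_base_lab1:
  assumes "k < z" and "k \<noteq> pendant_pos 0"
  shows "tstep (base k) (lab 1) \<in> spine ` {..<2 * z}"
proof (cases "off = 0")
  case True
  then obtain k' where k: "k = Suc k'" using assms(2) unfolding pendant_pos_def by (cases k) auto
  hence "tstep (base k) (lab 1) = spine (2 * k' + 1)"
    unfolding base_def using True tstep_spine_back[of "2 * k' + 1"] by (simp add: spine_letter_def)
  thus ?thesis using assms(1) k by simp
next
  case False
  hence off: "off = 1" using off_le_1 by simp
  hence "Suc (Suc (2 * k)) < 2 * z" using assms unfolding pendant_pos_def by auto
  moreover have "tstep (base k) (lab 1) = spine (Suc (Suc (2 * k)))"
    unfolding base_def using off tstep_spine_forward[of "Suc (2 * k)"] by (simp add: spine_letter_def)
  ultimately show ?thesis by simp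
qed

lemma tstep_base_lab:
  assumes "2 \<le> c" and "c < n"
  shows "tstep (base k) (lab c) = base k @ [lab c]"
proof -
  have "lab c \<noteq> spine_letter L" for L
    using assms lab_eq_iff[of c "L mod 2"] by (simp add: spine_letter_def)
  thus ?thesis unfolding base_def by (simp add: tstep_spine_snoc)
qed

lemma snoc_base_in_support_iff:
  assumes "2 \<le> c" and "c < n"
  shows "base k @ [lab c] \<in> support \<longleftrightarrow> (\<exists>i<q. pendant_pos i = k \<and> pendant_label i = c)"
proof -
  have "lab c \<noteq> spine_letter L" for L
    using assms lab_eq_iff[of c "L mod 2"] by (simp add: spine_letter_def)
  hence "base k @ [lab c] \<notin> spine ` {..<2 * z}"
    unfolding base_def by (auto dest!: sym[THEN iffD1[OF spine_eq_snoc_iff]])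
  hence "base k @ [lab c] \<in> support \<longleftrightarrow> (\<exists>i<q. pendant i = base k @ [lab c])"
    unfolding support_def by (auto simp: image_iff) (metis lessThan_iff)
  moreover have "pendant i = base k @ [lab c] \<longleftrightarrow> pendant_pos i = k \<and> pendant_label i = c" if "i < q" for i
    using lab_eq_iff[OF pendant_label_less[OF that] assms(2)] by (auto simp: pendant_def base_def)
  ultimately show ?thesis by auto
qed

lemma pendant_column_full_iff:
  assumes "2 \<le> c"
  shows "(\<forall>k<z. \<exists>i<q. pendant_pos i = k \<and> pendant_label i = c) \<longleftrightarrow> (c - 1) * z < q"
proof -
  have "(\<forall>k<z. \<exists>i<q. pendant_pos i = k \<and> pendant_label i = c) \<longleftrightarrow> (\<forall>k<z. (c - 2) * z + k + 1 < q)"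
    using assms by (simp add: pendant_slot_iff)
  also have "\<dots> \<longleftrightarrow> (c - 1) * z < q"
  proof
    assume all: "\<forall>k<z. (c - 2) * z + k + 1 < q"
    have "z - 1 < z" using z_pos by simp
    hence "(c - 2) * z + (z - 1) + 1 < q" using all by blast
    moreover have "(c - 1) * z = (c - 2) * z + (z - 1) + 1"
      using assms z_pos by (cases c) (auto simp: algebra_simps)
    ultimately show "(c - 1) * z < q" by simp
  next
    assume "(c - 1) * z < q"
    moreover have "(c - 1) * z = (c - 2) * z + z" using assms by (cases c) (auto simp: algebra_simps)
    ultimately show "\<forall>k<z. (c - 2) * z + k + 1 < q" by auto
  qed
  finally show ?thesis .
qed

text \<open>The number of labels carried by an arrow at every base vertex: lab 0, then lab 1 once
  pendant 0 exists, then one more label for each complete column of z pendants; in all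
  1 + \<lceil>q / z\<rceil>.\<close>
definition full_labels :: nat where
  "full_labels = Suc ((q + z - 1) div z)"

lemma less_full_labels_iff: "0 < c \<Longrightarrow> c < full_labels \<longleftrightarrow> (c - 1) * z < q"
  using mult_less_iff_less_ceiling_div[OF z_pos, of "c - 1" q] by (auto simp: full_labels_def)

lemma full_labels_less: "full_labels < n"
proof -
  have "(n - 1) * z = (n - 2) * z + z" using n_ge_3 by (simp add: diff_mult_distrib)
  hence "q + z - 1 < (n - 1) * z" using q_le z_pos by simp
  hence "(q + z - 1) div z < n - 1" using z_pos by (simp add: div_less_iff_less_mult)
  thus ?thesis using n_ge_3 by (simp add: full_labels_def)
qed

lemma base_neighbours_in_support_iff:
  assumes c: "c < n"
  shows "(\<forall>k<z. tstep (base k) (lab c) \<in> support) \<longleftrightarrow> c < full_labels"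
proof -
  consider "c = 0" | "c = 1" | "2 \<le> c" by arith
  thus ?thesis
  proof cases
    case 1
    thus ?thesis using tstep_base_lab0 by (auto simp: support_def full_labels_def)
  next
    case 2
    have "pendant 0 \<notin> spine ` {..<2 * z}" using n_ge_3 by (intro pendant_notin_spine) (simp add: pendant_label_def)
    hence "pendant 0 \<in> support \<longleftrightarrow> 0 < q" by (auto simp: support_def)
    thus ?thesis using 2 pendant_0 tstep_base_lab1 pendant_pos_less[of 0] less_full_labels_iff[of 1]
      by (auto simp: support_def)
  next
    case 3
    thus ?thesis using c less_full_labels_iff[of c] pendant_column_full_iff
      by (simp add: tstep_base_lab snoc_base_in_support_iff)
  qed
qed

lemma lab_surj: "i < n \<Longrightarrow> \<exists>c<n. lab c = i"
  using lab unfolding bij_betw_def by (metis imageE lessThan_iff)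

lemma full_neighbour_labels:
  "{i. i < n \<and> (\<forall>k<z. tstep (base k) i \<in> support)} = lab ` {..<full_labels}"
proof (intro equalityI subsetI)
  fix i assume "i \<in> {i. i < n \<and> (\<forall>k<z. tstep (base k) i \<in> support)}"
  then obtain c where "c < n" "lab c = i" "\<forall>k<z. tstep (base k) (lab c) \<in> support"
    using lab_surj by auto
  thus "i \<in> lab ` {..<full_labels}" using base_neighbours_in_support_iff by blast
next
  fix i assume "i \<in> lab ` {..<full_labels}"
  then obtain c where "c < full_labels" "i = lab c" by blast
  moreover from this have "c < n" using full_labels_less by simp
  ultimately show "i \<in> {i. i < n \<and> (\<forall>k<z. tstep (base k) i \<in> support)}"
    using base_neighbours_in_support_iff lab_less by blast
qed

lemma cover_thin_module:
  obtains N :: "'k::field kmod" where "cover_thin n N"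
    and "dimvec N = (z + (if off = 1 then q else 0), z + (if off = 0 then q else 0))"
    and "inj_arrows n (if off = 0 then N else kmod_dual N) = lab ` {..<full_labels}"
proof -
  obtain e1 where e1: "bij_betw e1 {..<card {u \<in> support. is_source u}} {u \<in> support. is_source u}"
    using ex_bij_betw_nat_finite[of "{u \<in> support. is_source u}"] finite_support
    unfolding atLeast0LessThan by auto
  obtain e2 where e2: "bij_betw e2 {..<card {w \<in> support. \<not> is_source w}} {w \<in> support. \<not> is_source w}"
    using ex_bij_betw_nat_finite[of "{w \<in> support. \<not> is_source w}"] finite_support
    unfolding atLeast0LessThan by auto
  interpret enumerated_support n support e1 e2
    using tree_vertex_support e1 e2 by unfold_locales
  define N where "N = pushdown n support (\<lambda>_ _. 1::'k) e1 e2"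
  have valid: "kmod_valid n N" unfolding N_def by (rule kmod_valid_pushdown)
  have thin: "cover_thin n N"
    unfolding cover_thin_def
    using valid thin_indec_const_prefix_closed[OF finite_support Nil_in_support tree_vertex_support
        butlast_in_support] e1 e2 kmod_iso_refl[OF valid]
    unfolding N_def by blast
  have dim: "dimvec N = (z + (if off = 1 then q else 0), z + (if off = 0 then q else 0))"
    unfolding N_def pushdown_const dimvec_def card_sources card_sinks by simp
  have "inj_arrows n (if off = 0 then N else kmod_dual N) =
      {i. i < n \<and> (\<forall>u\<in>support. is_source u = (off = 0) \<longrightarrow> tstep u i \<in> support)}"
    unfolding N_def by (rule inj_arrows_pushdown_side)
  also have "\<dots> = {i. i < n \<and> (\<forall>k<z. tstep (base k) i \<in> support)}"
  proof -
    have "(\<forall>u\<in>support. is_source u = (off = 0) \<longrightarrow> tstep u i \<in> support) \<longleftrightarrow>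
        (\<forall>u\<in>{u \<in> support. is_source u = (off = 0)}. tstep u i \<in> support)" for i
      by blast
    thus ?thesis unfolding base_support by auto
  qed
  also have "\<dots> = lab ` {..<full_labels}" by (rule full_neighbour_labels)
  finally show thesis using that thin dim by blast
qed

end

section \<open>Cyclic intervals\<close>

lemma mod_add_left_cancel_less:
  fixes j c c' n :: nat
  assumes "c < n" "c' < n" and eq: "(j + c) mod n = (j + c') mod n"
  shows "c = c'"
proof -
  have le: "c' \<le> c" if "c' < n" "(j + c) mod n = (j + c') mod n" for c c'
  proof (rule ccontr)
    assume "\<not> c' \<le> c"
    moreover have "(j + c') mod n = (j + c) mod n" using that(2) by simp
    ultimately have "n dvd (j + c') - (j + c)" by (subst (asm) mod_eq_dvd_iff_nat) simp_all
    hence "n dvd c' - c" by simp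
    moreover have "0 < c' - c" "c' - c < n" using that(1) \<open>\<not> c' \<le> c\<close> by simp_all
    ultimately show False using nat_dvd_not_less by blast
  qed
  show ?thesis using le[OF assms(2) eq] le[OF assms(1) eq[symmetric]] by simp
qed

lemma bij_betw_cyclic_shift: "bij_betw (\<lambda>c. (j + c) mod n) {..<n} {..<n :: nat}"
proof (cases "n = 0")
  case False
  have "inj_on (\<lambda>c. (j + c) mod n) {..<n}"
    by (rule inj_onI) (erule mod_add_left_cancel_less[rotated 2]; simp)
  moreover have "(\<lambda>c. (j + c) mod n) ` {..<n} \<subseteq> {..<n}" using False by auto
  ultimately show ?thesis unfolding bij_betw_def by (simp add: endo_inj_surj)
qed simp

text \<open>The shift j is recovered from the cyclic interval {j, ..., j + m - 1} (mod n) as its unique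
  element whose predecessor lies outside it.\<close>
lemma cyclic_interval_eq_imp_eq:
  fixes n m j l :: nat
  assumes m: "0 < m" "m < n" and j: "j < n" and l: "l < n"
    and eq: "(\<lambda>c. (j + c) mod n) ` {..<m} = (\<lambda>c. (l + c) mod n) ` {..<m}"
  shows "j = l"
proof -
  have "(j + 0) mod n \<in> (\<lambda>c. (j + c) mod n) ` {..<m}" using m(1) by (rule imageI[OF lessThan_iff[THEN iffD2]])
  hence "j \<in> (\<lambda>c. (l + c) mod n) ` {..<m}" using j eq by simp
  then obtain c where c: "c < m" "j = (l + c) mod n" by blast
  show ?thesis
  proof (cases c)
    case 0
    thus ?thesis using c l by simp
  next
    case (Suc c')
    have "(j + (n - 1)) mod n = (l + c + (n - 1)) mod n" unfolding c(2) by (rule mod_add_left_eq)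
    also have "l + c + (n - 1) = l + c' + n" using Suc m by simp
    also have "(l + c' + n) mod n = (l + c') mod n" by simp
    finally have "(j + (n - 1)) mod n = (l + c') mod n" .
    moreover have "(l + c') mod n \<in> (\<lambda>c. (l + c) mod n) ` {..<m}"
      using Suc c(1) by (intro imageI) simp
    ultimately have "(j + (n - 1)) mod n \<in> (\<lambda>c. (j + c) mod n) ` {..<m}" using eq by simp
    then obtain c'' where c'': "c'' < m" "(j + (n - 1)) mod n = (j + c'') mod n" by blast
    have "n - 1 = c''" using m c'' by (intro mod_add_left_cancel_less[OF _ _ c''(2)]) simp_all
    thus ?thesis using c''(1) m by simp
  qed
qed

lemma spine_with_pendants_cyclic:
  fixes n x y :: nat
  assumes "n \<ge> 2" and "x > 0" and "y > 0"
    and "real x / real (n - 1) < real y" and "real y \<le> real (n - 1) * real x"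
  shows "spine_with_pendants n (\<lambda>c. (j + c) mod n) (min x y) (max x y - min x y) (if x \<le> y then 0 else 1)"
proof -
  have "real x < real y * real (n - 1)" using assms(1,4) by (simp add: pos_divide_less_eq)
  hence x_less: "x < (n - 1) * y" by (metis of_nat_less_iff of_nat_mult mult.commute)
  have y_le: "y \<le> (n - 1) * x" using assms(5) by (metis of_nat_le_iff of_nat_mult)
  have n3: "n \<ge> 3" using assms(1) x_less y_le by (cases "n = 2") auto
  have "(n - 1) * x = (n - 2) * x + x" "(n - 1) * y = (n - 2) * y + y"
    using n3 by (simp_all add: diff_mult_distrib)
  hence "max x y - min x y \<le> (n - 2) * min x y" using x_less y_le by (auto simp: min_def max_def)
  thus ?thesis using n3 assms(2,3) bij_betw_cyclic_shift by unfold_locales auto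
qed

theorem corollary1p2:
  fixes n x y :: nat
  assumes "n \<ge> 2" and "x > 0" and "y > 0"
    and "real x / real (n - 1) < real y" and "real y \<le> real (n - 1) * real x"
  shows "\<exists>N :: nat \<Rightarrow> 'k::field kmod.
           (\<forall>j<n. cover_thin n (N j) \<and> dimvec (N j) = (x, y)) \<and>
           (\<forall>j<n. \<forall>l<n. j \<noteq> l \<longrightarrow> \<not> kmod_iso n (N j) (N l))"
proof -
  define z q off where "z = min x y" and "q = max x y - min x y" and "off = (if x \<le> y then 0 else 1::nat)"
  have construction: "spine_with_pendants n (\<lambda>c. (j + c) mod n) z q off" for j
    unfolding z_def q_def off_def by (rule spine_with_pendants_cyclic[OF assms])
  have dims: "(z + (if off = 1 then q else 0), z + (if off = 0 then q else 0)) = (x, y)"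
    by (auto simp: z_def q_def off_def)
  define m where "m = spine_with_pendants.full_labels z q"
  have m: "0 < m" "m < n"
    using spine_with_pendants.full_labels_less[OF construction[of 0]]
    by (simp_all add: m_def spine_with_pendants.full_labels_def[OF construction[of 0]])
  have "\<forall>j. \<exists>N :: 'k kmod. cover_thin n N \<and> dimvec N = (x, y) \<and>
      inj_arrows n (if off = 0 then N else kmod_dual N) = (\<lambda>c. (j + c) mod n) ` {..<m}"
  proof
    fix j
    obtain N :: "'k kmod" where "cover_thin n N"
      and "dimvec N = (z + (if off = 1 then q else 0), z + (if off = 0 then q else 0))"
      and "inj_arrows n (if off = 0 then N else kmod_dual N) =
        (\<lambda>c. (j + c) mod n) ` {..<spine_with_pendants.full_labels z q}"
      by (rule spine_with_pendants.cover_thin_module[OF construction[of j]])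
    thus "\<exists>N :: 'k kmod. cover_thin n N \<and> dimvec N = (x, y) \<and>
        inj_arrows n (if off = 0 then N else kmod_dual N) = (\<lambda>c. (j + c) mod n) ` {..<m}"
      unfolding dims m_def by blast
  qed
  from choice[OF this] obtain N :: "nat \<Rightarrow> 'k kmod" where N: "\<forall>j. cover_thin n (N j) \<and> dimvec (N j) = (x, y) \<and>
      inj_arrows n (if off = 0 then N j else kmod_dual (N j)) = (\<lambda>c. (j + c) mod n) ` {..<m}"
    by blast
  have "j = l" if "j < n" "l < n" "kmod_iso n (N j) (N l)" for j l
  proof (rule cyclic_interval_eq_imp_eq[OF m that(1,2)])
    have "kmod_valid n (N j)" "kmod_valid n (N l)" using N by (simp_all add: cover_thin_def)
    with inj_arrows_side_iso[OF that(3)] N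
    show "(\<lambda>c. (j + c) mod n) ` {..<m} = (\<lambda>c. (l + c) mod n) ` {..<m}" by metis
  qed
  thus ?thesis using N by blast
qed

end
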